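(* Let $\pi,\tau\in\mathfrak{S}_m$. Then $\pi$ and $\tau$ are super-strongly c-Wilf equivalent if and only if $r^\pi_{n,S}=r^\tau_{n,S}$ for all $n$ and all sets $S$ of positive integers.
   Context: The standardization $\operatorname{st}(w)$ of a word of distinct integers replaces its smallest entry by 1, the next smallest by 2, etc. For $\pi\in\mathfrak{S}_m$ and $\sigma\in\mathfrak{S}_n$, $\operatorname{Em}(\pi,\sigma)=\{i\in[n-m+1]:\operatorname{st}(\sigma_i\cdots\sigma_{i+m-1})=\pi\}$. For a set $S$ of positive integers, $a^\pi_{n,S}$ is the number of $\sigma\in\mathfrak{S}_n$ with $\operatorname{Em}(\pi,\sigma)=S$; $\pi,\tau$ are super-strongly c-Wilf equivalent if $a^\pi_{n,S}=a^\tau_{n,S}$ for all $n,S$. The overlap set is $\mathcal{O}_\pi=\{i\in[m-1]:\operatorname{st}(\pi_{i+1}\cdots\pi_m)=\operatorname{st}(\pi_1\cdots\pi_{m-i})\}$. The refined cluster number $r^\pi_{n,S}$ is defined as follows: if $S=\{i_1<\dots<i_k\}\subseteq[n-m+1]$ satisfies $i_1=1$, $i_k=n-m+1$ and $i_{j+1}-i_j\in\mathcal{O}_\pi$ for all $j\in[k-1]$, then $r^\pi_{n,S}$ is the number of $\sigma\in\mathfrak{S}_n$ with $S\subseteq\operatorname{Em}(\pi,\sigma)$; otherwise $r^\pi_{n,S}=0$. *)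

theory Defs
  imports Main
begin

definition perms :: "nat \<Rightarrow> nat list set" where
  "perms n = {xs. distinct xs \<and> set xs = {1..n}}"

definition st :: "nat list \<Rightarrow> nat list" where
  "st w = map (\<lambda>x. card {y \<in> set w. y \<le> x}) w"

text \<open>Em(pi, sigma): starting positions i (1-based, i in [n-m+1]) of
consecutive occurrences of pi in sigma.\<close>
definition Em :: "nat list \<Rightarrow> nat list \<Rightarrow> nat set" where
  "Em p s = {i. 1 \<le> i \<and> i + length p \<le> length s + 1 \<and>
                st (take (length p) (drop (i - 1) s)) = p}"

definition a_num :: "nat list \<Rightarrow> nat \<Rightarrow> nat set \<Rightarrow> nat" where
  "a_num p n S = card {s \<in> perms n. Em p s = S}"

definition overlap :: "nat list \<Rightarrow> nat set" where
  "overlap p = {i. 1 \<le> i \<and> i \<le> length p - 1 \<and>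
                   st (drop i p) = st (take (length p - i) p)}"

definition cluster_set :: "nat list \<Rightarrow> nat \<Rightarrow> nat set \<Rightarrow> bool" where
  "cluster_set p n S \<longleftrightarrow> finite S \<and> S \<noteq> {} \<and> Min S = 1 \<and>
     Max S + length p = n + 1 \<and>
     (\<forall>i\<in>S. \<forall>j\<in>S. i < j \<and> (\<forall>l\<in>S. \<not> (i < l \<and> l < j)) \<longrightarrow> j - i \<in> overlap p)"

definition r_num :: "nat list \<Rightarrow> nat \<Rightarrow> nat set \<Rightarrow> nat" where
  "r_num p n S = (if cluster_set p n S then card {s \<in> perms n. S \<subseteq> Em p s} else 0)"

definition super_strongly_cWilf :: "nat list \<Rightarrow> nat list \<Rightarrow> bool" where
  "super_strongly_cWilf p q \<longleftrightarrow>
     (\<forall>n S. S \<subseteq> {0<..} \<longrightarrow> a_num p n S = a_num q n S)"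

end

theory Submission
  imports Defs "HOL-Combinatorics.Multiset_Permutations"
begin

text \<open>
  Let b(n, S) count the permutations \<sigma> of [n] with S \<subseteq> Em(\<pi>, \<sigma>). Summing the a-numbers
  over supersets gives the b-numbers, and this triangular system can be inverted, so \<pi> and
  \<tau> are super-strongly c-Wilf equivalent iff their b-numbers agree.

  Equal b-numbers give equal r-numbers: on a cluster set the r-number is the b-number, and a set
  that is a cluster set for \<pi> but not for \<tau> has two consecutive elements whose difference is
  an overlap of \<pi> but not of \<tau>; two occurrences of \<tau> that close would overlap, so the
  b-number of \<tau> vanishes.

  Conversely the r-numbers determine the b-numbers, by induction on n. If some k cuts S, i.e.
  every occurrence window starting in S lies within [1, k] or within [k + 1, n], then encoding
  a permutation by its set of first k values and the standardizations of its prefix and suffix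
  gives b(n, S) = binomial(n, k) b(k, S_left) b(n - k, S_right - k). If no k cuts S and all
  windows fit into [n], then S starts at 1, ends at n - m + 1 and has consecutive gaps below m,
  so S is a cluster set unless some gap is not an overlap, in which case b(n, S) = 0 = r(n, S).
\<close>

section \<open>Standardization\<close>

definition rank :: "nat list \<Rightarrow> nat \<Rightarrow> nat" where
  "rank w x = card {y \<in> set w. y \<le> x}"

lemma st_eq_map_rank: "st w = map (rank w) w"
  by (simp add: st_def rank_def)

lemma length_st [simp]: "length (st w) = length w"
  by (simp add: st_def)

lemma strict_mono_on_rank: "strict_mono_on (set w) (rank w)"
proof (rule strict_mono_onI)
  fix x x' assume "x \<in> set w" "x' \<in> set w" "x < x'"
  then have "{y \<in> set w. y \<le> x} \<subseteq> {y \<in> set w. y \<le> x'}"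
    and "x' \<in> {y \<in> set w. y \<le> x'} - {y \<in> set w. y \<le> x}" by auto
  then have "{y \<in> set w. y \<le> x} \<subset> {y \<in> set w. y \<le> x'}" by blast
  then show "rank w x < rank w x'" unfolding rank_def by (simp add: psubset_card_mono)
qed

lemma st_map_strict_mono:
  assumes mono: "strict_mono_on A f" and v: "set v \<subseteq> A"
  shows "st (map f v) = st v"
proof -
  have "card {y \<in> f ` set v. y \<le> f x} = card {y \<in> set v. y \<le> x}" if x: "x \<in> set v" for x
  proof -
    have "{y \<in> f ` set v. y \<le> f x} = f ` {y \<in> set v. y \<le> x}"
      using strict_mono_on_less_eq[OF mono] v x by blast
    moreover have "inj_on f {y \<in> set v. y \<le> x}"
      by (rule inj_on_subset[OF strict_mono_on_imp_inj_on[OF mono]]) (use v in auto)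
    ultimately show ?thesis by (simp add: card_image)
  qed
  then show ?thesis unfolding st_def by (simp cong: map_cong)
qed

lemma st_take_drop_st: "st (take a (drop b (st w))) = st (take a (drop b w))"
proof -
  have "take a (drop b (st w)) = map (rank w) (take a (drop b w))"
    by (simp add: st_eq_map_rank take_map drop_map)
  moreover have "set (take a (drop b w)) \<subseteq> set w"
    by (meson in_set_dropD in_set_takeD subsetI)
  ultimately show ?thesis using st_map_strict_mono[OF strict_mono_on_rank] by simp
qed

lemma st_drop_st: "st (drop b (st w)) = st (drop b w)"
  using st_take_drop_st[of "length w" b w] by (simp add: st_def)

lemma st_take_st: "st (take a (st w)) = st (take a w)"
  using st_take_drop_st[of a 0 w] by simp

lemma st_inj:
  assumes "set v = set v'" "st v = st v'"
  shows "v = v'"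
proof -
  have "rank v = rank v'" using assms(1) by (simp add: rank_def fun_eq_iff)
  then have "map (rank v) v = map (rank v) v'" using assms(2) by (simp add: st_eq_map_rank)
  moreover have "inj_on (rank v) (set v \<union> set v')"
    using strict_mono_on_imp_inj_on[OF strict_mono_on_rank, of v] assms(1) by simp
  ultimately show ?thesis using inj_on_map_eq_map by blast
qed

lemma perms_eq_permutations_of_set: "perms n = permutations_of_set {1..n}"
  by (auto simp: perms_def permutations_of_set_def)

lemma finite_perms [simp]: "finite (perms n)"
  by (simp add: perms_eq_permutations_of_set)

lemma card_perms: "card (perms n) = fact n"
  by (simp add: perms_eq_permutations_of_set)

lemma length_perms: "s \<in> perms n \<Longrightarrow> length s = n"
  by (auto simp: perms_def dest: distinct_card)

lemma distinct_perms: "s \<in> perms n \<Longrightarrow> distinct s"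
  by (simp add: perms_def)

lemma st_in_perms:
  assumes "distinct w"
  shows "st w \<in> perms (length w)"
proof -
  have "inj_on (rank w) (set w)"
    by (rule strict_mono_on_imp_inj_on[OF strict_mono_on_rank])
  then have dist: "distinct (st w)"
    using assms by (simp add: st_eq_map_rank distinct_map)
  have "rank w x \<in> {1..length w}" if "x \<in> set w" for x
  proof -
    have "x \<in> {y \<in> set w. y \<le> x}" using that by simp
    then have "1 \<le> rank w x" unfolding rank_def by (auto simp: Suc_le_eq card_gt_0_iff)
    moreover have "rank w x \<le> card (set w)" unfolding rank_def by (rule card_mono) auto
    ultimately show ?thesis using assms by (simp add: distinct_card)
  qed
  then have "set (st w) \<subseteq> {1..length w}" by (auto simp: st_eq_map_rank)
  moreover have "card (set (st w)) = length w" using distinct_card[OF dist] by simp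
  ultimately show ?thesis using dist by (simp add: perms_def card_subset_eq)
qed

lemma set_drop_perms: "s \<in> perms n \<Longrightarrow> set (drop k s) = {1..n} - set (take k s)"
proof -
  assume s: "s \<in> perms n"
  have "distinct (take k s @ drop k s)" using distinct_perms[OF s] by simp
  then have "set (take k s) \<inter> set (drop k s) = {}" by (simp only: distinct_append)
  moreover have "set (take k s) \<union> set (drop k s) = {1..n}"
    using s by (simp add: perms_def flip: set_append)
  ultimately show ?thesis by blast
qed

lemma Em_subset: "p \<noteq> [] \<Longrightarrow> s \<in> perms n \<Longrightarrow> Em p s \<subseteq> {1..n}"
  by (fastforce simp: Em_def length_perms neq_Nil_conv)

lemma Em_diff_in_overlap:
  assumes "i \<in> Em p s" "j \<in> Em p s" "i < j" "j - i < length p"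
  shows "j - i \<in> overlap p"
proof -
  define d where "d = j - i"
  define w where "w = take (length p) (drop (i - 1) s)"
  define w' where "w' = take (length p) (drop (j - 1) s)"
  have "1 \<le> i" "st w = p" "st w' = p" using assms(1,2) by (auto simp: Em_def w_def w'_def)
  have "drop d w = take (length p - d) w'"
    using \<open>1 \<le> i\<close> assms(3) by (simp add: w_def w'_def d_def drop_take add.commute)
  then have "st (drop d p) = st (take (length p - d) p)"
    using st_drop_st[of d w] st_take_st[of "length p - d" w'] \<open>st w = p\<close> \<open>st w' = p\<close> by simp
  moreover have "1 \<le> d" "d \<le> length p - 1" using assms(3,4) by (auto simp: d_def)
  ultimately show ?thesis by (simp add: overlap_def d_def)
qed

lemma Em_st_take_iff:
  assumes "k \<le> length s" "1 \<le> i" "i + length p \<le> k + 1"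
  shows "i \<in> Em p (st (take k s)) \<longleftrightarrow> i \<in> Em p s"
proof -
  have "take (length p) (drop (i - 1) (take k s)) = take (length p) (drop (i - 1) s)"
    using assms(2,3) by (simp add: drop_take min_absorb1)
  then have "st (take (length p) (drop (i - 1) (st (take k s))))
             = st (take (length p) (drop (i - 1) s))"
    by (simp add: st_take_drop_st)
  then show ?thesis using assms by (simp add: Em_def)
qed

lemma Em_st_drop_iff:
  assumes "k \<le> length s" "k < i"
  shows "i - k \<in> Em p (st (drop k s)) \<longleftrightarrow> i \<in> Em p s"
proof -
  have "drop (i - k - 1) (drop k s) = drop (i - 1) s"
    using assms(2) by simp
  then have "st (take (length p) (drop (i - k - 1) (st (drop k s))))
             = st (take (length p) (drop (i - 1) s))"
    by (simp add: st_take_drop_st)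
  moreover have "1 \<le> i - k \<and> i - k + length p \<le> length s - k + 1
                 \<longleftrightarrow> 1 \<le> i \<and> i + length p \<le> length s + 1"
    using assms by arith
  ultimately show ?thesis unfolding Em_def mem_Collect_eq length_st length_drop by metis
qed

section \<open>Splitting a permutation into a prefix and a suffix\<close>

definition split_perm :: "nat \<Rightarrow> nat list \<Rightarrow> nat set \<times> nat list \<times> nat list" where
  "split_perm k s = (set (take k s), st (take k s), st (drop k s))"

lemma inj_on_split_perm: "inj_on (split_perm k) (perms n)"
proof (rule inj_onI)
  fix s s' assume s: "s \<in> perms n" and s': "s' \<in> perms n"
    and "split_perm k s = split_perm k s'"
  then have eq: "set (take k s) = set (take k s')" "st (take k s) = st (take k s')"
    "st (drop k s) = st (drop k s')" by (simp_all add: split_perm_def)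
  have "take k s = take k s'" using eq(1,2) by (rule st_inj)
  moreover have "drop k s = drop k s'"
  proof (rule st_inj)
    show "set (drop k s) = set (drop k s')"
      using eq(1) set_drop_perms[OF s, of k] set_drop_perms[OF s', of k] by simp
  qed (fact eq(3))
  ultimately show "s = s'" by (metis append_take_drop_id)
qed

lemma bij_betw_split_perm:
  assumes "k \<le> n"
  shows "bij_betw (split_perm k) (perms n)
           ({A. A \<subseteq> {1..n} \<and> card A = k} \<times> perms k \<times> perms (n - k))"
    (is "bij_betw _ _ ?C")
proof -
  have "split_perm k s \<in> ?C" if s: "s \<in> perms n" for s
    using st_in_perms[of "take k s"] st_in_perms[of "drop k s"] distinct_perms[OF s]
      length_perms[OF s] assms s
    by (auto simp: split_perm_def perms_def distinct_card dest: in_set_takeD)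
  then have "split_perm k ` perms n \<subseteq> ?C" by blast
  moreover have "card ?C = (n choose k) * (fact k * fact (n - k))"
    by (simp add: card_cartesian_product n_subsets card_perms)
  then have "card (split_perm k ` perms n) = card ?C"
    using binomial_fact_lemma[OF assms]
    by (simp add: card_image[OF inj_on_split_perm] card_perms ac_simps)
  ultimately have "split_perm k ` perms n = ?C"
    by (simp add: card_subset_eq perms_eq_permutations_of_set)
  with inj_on_split_perm show ?thesis by (simp add: bij_betw_def)
qed

lemma card_perms_split:
  assumes "k \<le> n"
  shows "card {s \<in> perms n. P (st (take k s)) \<and> Q (st (drop k s))}
           = (n choose k) * card {t \<in> perms k. P t} * card {u \<in> perms (n - k). Q u}"
proof -
  let ?C = "{A. A \<subseteq> {1..n} \<and> card A = k} \<times> perms k \<times> perms (n - k)"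
  have "bij_betw (split_perm k) {s \<in> perms n. P (st (take k s)) \<and> Q (st (drop k s))}
          {y \<in> ?C. case y of (A, t, u) \<Rightarrow> P t \<and> Q u}"
    by (rule bij_betw_Collect[OF bij_betw_split_perm[OF assms]]) (simp add: split_perm_def)
  moreover have "{y \<in> ?C. case y of (A, t, u) \<Rightarrow> P t \<and> Q u}
      = {A. A \<subseteq> {1..n} \<and> card A = k} \<times> {t \<in> perms k. P t} \<times> {u \<in> perms (n - k). Q u}"
    by auto
  ultimately show ?thesis by (simp add: bij_betw_same_card card_cartesian_product n_subsets)
qed

section \<open>Inversion of sums over supersets\<close>

lemma eq_if_sum_supersets_eq:
  fixes f g :: "'a set \<Rightarrow> 'b::cancel_comm_monoid_add"
  assumes U: "finite U"
    and sums: "\<And>S. S \<subseteq> U \<Longrightarrow> (\<Sum>T | S \<subseteq> T \<and> T \<subseteq> U. f T) = (\<Sum>T | S \<subseteq> T \<and> T \<subseteq> U. g T)"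
    and "S \<subseteq> U"
  shows "f S = g S"
  using assms(3)
proof (induction "card (U - S)" arbitrary: S rule: less_induct)
  case less
  let ?W = "{T. S \<subseteq> T \<and> T \<subseteq> U}"
  have fin: "finite ?W" by (rule finite_subset[of _ "Pow U"]) (use U in auto)
  have S: "S \<in> ?W" using less.prems by simp
  have "sum f (?W - {S}) = sum g (?W - {S})"
  proof (rule sum.cong)
    fix T assume T: "T \<in> ?W - {S}"
    then have "U - T \<subset> U - S" using less.prems by blast
    then have "card (U - T) < card (U - S)" using U by (simp add: psubset_card_mono)
    then show "f T = g T" by (rule less.hyps) (use T in simp)
  qed simp
  then show ?case using sums[OF less.prems] sum.remove[OF fin S, of f] sum.remove[OF fin S, of g]
    by simp
qed

definition b_num :: "nat list \<Rightarrow> nat \<Rightarrow> nat set \<Rightarrow> nat" where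
  "b_num p n S = card {s \<in> perms n. S \<subseteq> Em p s}"

lemma b_num_eq_sum_a_num:
  assumes "p \<noteq> []"
  shows "b_num p n S = (\<Sum>T | S \<subseteq> T \<and> T \<subseteq> {1..n}. a_num p n T)"
proof -
  let ?W = "{T. S \<subseteq> T \<and> T \<subseteq> {1..n}}"
  have "finite ?W" by (rule finite_subset[of _ "Pow {1..n}"]) auto
  have "{s \<in> perms n. S \<subseteq> Em p s} = (\<Union>T\<in>?W. {s \<in> perms n. Em p s = T})"
    using Em_subset[OF assms] by blast
  also have "card \<dots> = (\<Sum>T\<in>?W. card {s \<in> perms n. Em p s = T})"
    using \<open>finite ?W\<close> by (intro card_UN_disjoint) auto
  finally show ?thesis by (simp add: b_num_def a_num_def)
qed

lemma a_num_eq_0_if_not_subset: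
  assumes "p \<noteq> []" "\<not> S \<subseteq> {1..n}"
  shows "a_num p n S = 0"
proof -
  have "{s \<in> perms n. Em p s = S} = {}" using Em_subset[OF assms(1)] assms(2) by blast
  then show ?thesis by (simp add: a_num_def)
qed

lemma super_strongly_cWilf_iff_b_num_eq:
  assumes "p \<noteq> []" "q \<noteq> []"
  shows "super_strongly_cWilf p q \<longleftrightarrow> (\<forall>n S. S \<subseteq> {0<..} \<longrightarrow> b_num p n S = b_num q n S)"
proof
  assume ss: "super_strongly_cWilf p q"
  have "a_num p n T = a_num q n T" if "T \<subseteq> {1..n}" for n T
  proof -
    have "T \<subseteq> {0<..}" using that by auto
    with ss show ?thesis by (simp add: super_strongly_cWilf_def)
  qed
  then show "\<forall>n S. S \<subseteq> {0<..} \<longrightarrow> b_num p n S = b_num q n S"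
    by (simp add: b_num_eq_sum_a_num assms)
next
  assume b: "\<forall>n S. S \<subseteq> {0<..} \<longrightarrow> b_num p n S = b_num q n S"
  have "a_num p n S = a_num q n S" for n S
  proof (cases "S \<subseteq> {1..n}")
    case True
    have "(\<Sum>T | S' \<subseteq> T \<and> T \<subseteq> {1..n}. a_num p n T) = (\<Sum>T | S' \<subseteq> T \<and> T \<subseteq> {1..n}. a_num q n T)"
      if "S' \<subseteq> {1..n}" for S'
    proof -
      have "S' \<subseteq> {0<..}" using that by auto
      with b have "b_num p n S' = b_num q n S'" by blast
      then show ?thesis
        using b_num_eq_sum_a_num[OF assms(1), of n S'] b_num_eq_sum_a_num[OF assms(2), of n S']
        by simp
    qed
    then show ?thesis by (rule eq_if_sum_supersets_eq[OF finite_atLeastAtMost _ True])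
  next
    case False
    then show ?thesis using a_num_eq_0_if_not_subset assms by simp
  qed
  then show "super_strongly_cWilf p q" by (simp add: super_strongly_cWilf_def)
qed

lemma r_num_conv_b_num: "r_num p n S = (if cluster_set p n S then b_num p n S else 0)"
  by (simp add: r_num_def b_num_def)

lemma b_num_eq_0_if_window_exceeds:
  assumes "i \<in> S" "n + 1 < i + length p"
  shows "b_num p n S = 0"
proof -
  have "{s \<in> perms n. S \<subseteq> Em p s} = {}"
    using assms by (auto simp: Em_def length_perms)
  then show ?thesis by (simp add: b_num_def)
qed

lemma b_num_eq_0_if_gap_not_in_overlap:
  assumes "i \<in> S" "j \<in> S" "i < j" "j - i < length p" "j - i \<notin> overlap p"
  shows "b_num p n S = 0"
proof -
  have "{s \<in> perms n. S \<subseteq> Em p s} = {}"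
    using assms Em_diff_in_overlap[of i p _ j] by blast
  then show ?thesis by (simp add: b_num_def)
qed

lemma b_num_eq_0_if_cluster_set_differs:
  assumes "cluster_set p n S" "\<not> cluster_set q n S" "length q = length p"
  shows "b_num q n S = 0"
proof -
  have "\<not> (\<forall>i\<in>S. \<forall>j\<in>S. i < j \<and> (\<forall>l\<in>S. \<not> (i < l \<and> l < j)) \<longrightarrow> j - i \<in> overlap q)"
    using assms unfolding cluster_set_def by simp
  with assms(1) obtain i j where "i \<in> S" "j \<in> S" "i < j" "j - i \<notin> overlap q" "j - i \<in> overlap p"
    unfolding cluster_set_def by blast
  moreover have "j - i < length q" using \<open>j - i \<in> overlap p\<close> assms(3) by (auto simp: overlap_def)
  ultimately show ?thesis by (intro b_num_eq_0_if_gap_not_in_overlap) auto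
qed

lemma r_num_eq_if_b_num_eq:
  assumes "length q = length p" and "\<forall>n S. S \<subseteq> {0<..} \<longrightarrow> b_num p n S = b_num q n S"
    and "S \<subseteq> {0<..}"
  shows "r_num p n S = r_num q n S"
  using assms b_num_eq_0_if_cluster_set_differs[of p n S q] b_num_eq_0_if_cluster_set_differs[of q n S p]
  by (simp add: r_num_conv_b_num)

section \<open>Cuts\<close>

definition cut_at :: "nat \<Rightarrow> nat set \<Rightarrow> nat \<Rightarrow> bool" where
  "cut_at m S k \<longleftrightarrow> (\<forall>i\<in>S. i + m \<le> k + 1 \<or> k < i)"

lemma b_num_cut_at:
  assumes kn: "k \<le> n" and S_pos: "S \<subseteq> {0<..}" and cut: "cut_at (length p) S k"
  shows "b_num p n S = (n choose k) * b_num p k {i \<in> S. i + length p \<le> k + 1}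
                         * b_num p (n - k) ((\<lambda>i. i - k) ` {i \<in> S. k < i})"
    (is "_ = _ * b_num p k ?L * b_num p (n - k) ?R")
proof -
  have "S \<subseteq> Em p s \<longleftrightarrow> ?L \<subseteq> Em p (st (take k s)) \<and> ?R \<subseteq> Em p (st (drop k s))"
    if s: "s \<in> perms n" for s
  proof -
    have ks: "k \<le> length s" using kn length_perms[OF s] by simp
    have left: "?L \<subseteq> Em p s \<longleftrightarrow> ?L \<subseteq> Em p (st (take k s))"
    proof -
      have "i \<in> Em p s \<longleftrightarrow> i \<in> Em p (st (take k s))" if "i \<in> ?L" for i
        using that S_pos Em_st_take_iff[OF ks, of i p] by force
      then show ?thesis by blast
    qed
    have "?R \<subseteq> Em p (st (drop k s)) \<longleftrightarrow> (\<forall>i\<in>S. k < i \<longrightarrow> i - k \<in> Em p (st (drop k s)))"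
      by blast
    then have right: "{i \<in> S. k < i} \<subseteq> Em p s \<longleftrightarrow> ?R \<subseteq> Em p (st (drop k s))"
      using Em_st_drop_iff[OF ks, of _ p] by auto
    have "S \<subseteq> Em p s \<longleftrightarrow> ?L \<subseteq> Em p s \<and> {i \<in> S. k < i} \<subseteq> Em p s"
      using cut unfolding cut_at_def by blast
    then show ?thesis by (simp only: left right)
  qed
  then have "{s \<in> perms n. S \<subseteq> Em p s} =
      {s \<in> perms n. ?L \<subseteq> Em p (st (take k s)) \<and> ?R \<subseteq> Em p (st (drop k s))}"
    by blast
  then show ?thesis
    unfolding b_num_def using card_perms_split[OF kn, of "\<lambda>t. ?L \<subseteq> Em p t" "\<lambda>u. ?R \<subseteq> Em p u"]
    by simp
qed

context
  fixes m n :: nat and S :: "nat set"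
  assumes m_pos: "0 < m" and S_pos: "S \<subseteq> {0<..}" and S_ne: "S \<noteq> {}"
    and windows_fit: "\<forall>i\<in>S. i + m \<le> n + 1"
    and uncut: "\<forall>k. 0 < k \<and> k < n \<longrightarrow> \<not> cut_at m S k"
begin

lemma finite_if_uncut: "finite S"
  using S_pos windows_fit m_pos by (intro finite_subset[of S "{..n}"]) auto

lemma Min_eq_1_if_uncut: "Min S = 1"
proof (rule ccontr)
  assume "Min S \<noteq> 1"
  have "Min S \<in> S" using finite_if_uncut S_ne by simp
  then have "1 < Min S" "Min S + m \<le> n + 1"
    using \<open>Min S \<noteq> 1\<close> S_pos windows_fit by force+
  then have "0 < Min S - 1" "Min S - 1 < n" using m_pos by linarith+
  moreover have "cut_at m S (Min S - 1)"
    unfolding cut_at_def using Min_le[OF finite_if_uncut] \<open>1 < Min S\<close> by fastforce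
  ultimately show False using uncut by blast
qed

lemma Max_add_eq_if_uncut: "Max S + m = n + 1"
proof (rule ccontr)
  assume "Max S + m \<noteq> n + 1"
  have "Max S \<in> S" using finite_if_uncut S_ne by simp
  then have "0 < Max S" "Max S + m < n + 1"
    using \<open>Max S + m \<noteq> n + 1\<close> S_pos windows_fit by force+
  then have "0 < Max S + m - 1" "Max S + m - 1 < n" using m_pos by linarith+
  moreover have "cut_at m S (Max S + m - 1)"
    unfolding cut_at_def using Max_ge[OF finite_if_uncut] m_pos by fastforce
  ultimately show False using uncut by blast
qed

lemma gap_less_if_uncut:
  assumes "i \<in> S" "j \<in> S" "i < j" "\<forall>l\<in>S. \<not> (i < l \<and> l < j)"
  shows "j - i < m"
proof (rule ccontr)
  assume "\<not> j - i < m"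
  then have "i + m \<le> j" using assms(3) by linarith
  moreover have "0 < i" "j + m \<le> n + 1" using assms(1,2) S_pos windows_fit by auto
  ultimately have "0 < i + m - 1" "i + m - 1 < n" using m_pos by linarith+
  moreover have "cut_at m S (i + m - 1)"
    unfolding cut_at_def
  proof
    fix l assume "l \<in> S"
    then have "l \<le> i \<or> j \<le> l" using assms(4) by force
    then show "l + m \<le> i + m - 1 + 1 \<or> i + m - 1 < l" using \<open>i + m \<le> j\<close> m_pos by linarith
  qed
  ultimately show False using uncut by blast
qed

end

lemma b_num_eq_r_num_if_uncut:
  assumes "p \<noteq> []" "S \<subseteq> {0<..}" "S \<noteq> {}" "\<forall>i\<in>S. i + length p \<le> n + 1"
    and "\<forall>k. 0 < k \<and> k < n \<longrightarrow> \<not> cut_at (length p) S k"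
  shows "b_num p n S = r_num p n S"
proof (cases "cluster_set p n S")
  case True
  then show ?thesis by (simp add: r_num_conv_b_num)
next
  case False
  have "length p > 0" using assms(1) by simp
  note uncut = this assms(2-5)
  from False obtain i j where ij: "i \<in> S" "j \<in> S" "i < j" "\<forall>l\<in>S. \<not> (i < l \<and> l < j)"
      and "j - i \<notin> overlap p"
    using assms(3) finite_if_uncut[OF uncut] Min_eq_1_if_uncut[OF uncut]
      Max_add_eq_if_uncut[OF uncut]
    unfolding cluster_set_def by blast
  then have "b_num p n S = 0"
    using b_num_eq_0_if_gap_not_in_overlap[OF ij(1-3) gap_less_if_uncut[OF uncut ij]] by blast
  with False show ?thesis by (simp add: r_num_conv_b_num)
qed

lemma b_num_eq_if_r_num_eq:
  assumes len: "length q = length p" and "p \<noteq> []"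
    and r: "\<forall>n S. S \<subseteq> {0<..} \<longrightarrow> r_num p n S = r_num q n S"
    and "S \<subseteq> {0<..}"
  shows "b_num p n S = b_num q n S"
  using assms(4)
proof (induction n arbitrary: S rule: less_induct)
  case (less n S)
  consider (cut) k where "0 < k" "k < n" "cut_at (length p) S k"
    | (empty) "S = {}"
    | (exceeds) i where "i \<in> S" "n + 1 < i + length p"
    | (uncut) "S \<noteq> {}" "\<forall>i\<in>S. i + length p \<le> n + 1"
        "\<forall>k. 0 < k \<and> k < n \<longrightarrow> \<not> cut_at (length p) S k"
    by (meson not_le)
  then show ?case
  proof cases
    case cut
    have "{i \<in> S. i + length p \<le> k + 1} \<subseteq> {0<..}" "(\<lambda>i. i - k) ` {i \<in> S. k < i} \<subseteq> {0<..}"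
      using less.prems by auto
    with cut less.IH show ?thesis
      using b_num_cut_at[of k n S p] b_num_cut_at[of k n S q] less.prems len by simp
  next
    case empty
    then show ?thesis by (simp add: b_num_def)
  next
    case exceeds
    then show ?thesis using b_num_eq_0_if_window_exceeds len by metis
  next
    case uncut
    have "q \<noteq> []" using len assms(2) by auto
    with uncut len have "b_num p n S = r_num p n S" "b_num q n S = r_num q n S"
      using b_num_eq_r_num_if_uncut[OF assms(2) less.prems] b_num_eq_r_num_if_uncut[of q S n]
        less.prems by simp_all
    with r less.prems show ?thesis by simp
  qed
qed

theorem proposition5p1:
  fixes p q :: "nat list" and m :: nat
  assumes "p \<in> perms m" and "q \<in> perms m"
  shows "super_strongly_cWilf p q \<longleftrightarrow>
         (\<forall>n S. S \<subseteq> {0<..} \<longrightarrow> r_num p n S = r_num q n S)"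
proof (cases "m = 0")
  case True
  with assms have "p = q" by (auto dest!: length_perms)
  then show ?thesis by (simp add: super_strongly_cWilf_def)
next
  case False
  with assms have "p \<noteq> []" "q \<noteq> []" and len: "length q = length p"
    by (auto dest: length_perms)
  have "super_strongly_cWilf p q \<longleftrightarrow> (\<forall>n S. S \<subseteq> {0<..} \<longrightarrow> b_num p n S = b_num q n S)"
    using \<open>p \<noteq> []\<close> \<open>q \<noteq> []\<close> by (rule super_strongly_cWilf_iff_b_num_eq)
  also have "\<dots> \<longleftrightarrow> (\<forall>n S. S \<subseteq> {0<..} \<longrightarrow> r_num p n S = r_num q n S)"
    using r_num_eq_if_b_num_eq[OF len] b_num_eq_if_r_num_eq[OF len \<open>p \<noteq> []\<close>] by blast
  finally show ?thesis .
qed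

end
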